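(* Let $\delta=x^{\mathbf d}f(\theta)$ be a homogeneous differential operator of degree $\mathbf d$ (with $\mathbf d\ne\mathbf 0$, $-\mathbf d\in S$), let $\mathcal B\subseteq\mathbb N^n$ be compatible with $\mathbf d$, and let $I=(x^{\mathbf a}\mid \mathbf a\in W_{\mathcal B})$. Then $I$ is $\delta$-compatible. In particular, if $\mathbf b\in W_{\mathcal B}$ and $\operatorname{val}(\mathbf b)$ is finite, then $\operatorname{vpt}(\mathbf b)\in W_{\mathcal B}$.
   Context: Standing notation. Fix $d\ge 1$. Let $\sigma\subseteq\mathbb R^d$ be a full-dimensional, strongly convex rational polyhedral cone, so $\sigma^\vee$ is full-dimensional and strongly convex. $S=\sigma^\vee\cap\mathbb Z^d$, $R=\mathbb C[S]$ with monomial basis $x^{\mathbf a}$, $\mathbf a\in S$. $h_1,\dots,h_n$ are the primitive support functions of the facets of $\sigma^\vee$, so $S=\{\mathbf a\in\mathbb Z^d:h_i(\mathbf a)\ge0\ \forall i\}$. $(g,m)!=\prod_{j=0}^m(g-j)$ for $m\ge0$, $=1$ for $m<0$; $H_{\mathbf d}=\prod_i(h_i,h_i(-\mathbf d)-1)!$. For $f$ divisible by $H_{\mathbf d}$, $\delta=x^{\mathbf d}f(\theta)$ acts by $\delta(x^{\mathbf a})=f(\mathbf a)x^{\mathbf a+\mathbf d}$. $I$ is $\delta$-compatible if $\delta(I)\subseteq I$. $V_{\mathrm{mon}}(f)=\{\mathbf a\in\mathbb Z^d:f(\mathbf a)=0\}$. Assume $\mathbf d\ne\mathbf 0$ and $-\mathbf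 d\in S$; write $\mathbf d=q\mathbf e$ with $q\in\mathbb Z_{\ge1}$ and $\mathbf e\in\mathbb Z^d$ primitive. For $\mathbf a\in\mathbb Z^d$ let $\operatorname{val}(\mathbf a)=\inf\{t\in\mathbb R:\mathbf a+t\mathbf d\in V_{\mathrm{mon}}(f)\}\in\mathbb R\cup\{\pm\infty\}$ (with $\inf\emptyset=+\infty$). When $\operatorname{val}(\mathbf a)$ is finite, let $\operatorname{pval}(\mathbf a)=\max\{t\in[\operatorname{val}(\mathbf a),\operatorname{val}(\mathbf a)+1):\mathbf a+t\mathbf d\in V_{\mathrm{mon}}(f)\}$ (such $t$ lie in $\frac1q\mathbb Z$, so the max exists) and $\operatorname{vpt}(\mathbf a)=\mathbf a+\operatorname{pval}(\mathbf a)\mathbf d\in\mathbb Z^d$. A tuple $\beta\in\mathbb N^n$ is compatible with $\mathbf d$ if for every $i$, $\beta_i=0$ or $h_i(\mathbf d)=0$; a set $\mathcal B\subseteq\mathbb N^n$ is compatible with $\mathbf d$ if each of its elements is. $W_\beta=\{\mathbf a\in S: h_i(\mathbf a)\ge\beta_i\ \forall i\}$ and $W_{\mathcal B}=\bigcup_{\beta\in\mathcal B}W_\beta$. *)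

theory Defs
  imports "HOL-Analysis.Analysis"
begin

definition rvec :: "int^'d \<Rightarrow> real^'d" where
  "rvec a = (\<chi> j. real_of_int (a $ j))"

definition hval :: "int^'d \<Rightarrow> int^'d \<Rightarrow> int" where
  "hval h a = (\<Sum>j\<in>UNIV. h $ j * a $ j)"

definition rat_poly_cone :: "(real^'d) set \<Rightarrow> bool" where
  "rat_poly_cone \<sigma> \<longleftrightarrow> (\<exists>V :: (int^'d) set. finite V \<and>
     \<sigma> = {(\<Sum>v\<in>V. c v *\<^sub>R rvec v) | c. \<forall>v\<in>V. 0 \<le> c v})"

definition strongly_convex :: "(real^'d) set \<Rightarrow> bool" where
  "strongly_convex \<sigma> \<longleftrightarrow> (\<forall>x. x \<in> \<sigma> \<and> - x \<in> \<sigma> \<longrightarrow> x = 0)"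

definition full_dimensional :: "(real^'d) set \<Rightarrow> bool" where
  "full_dimensional \<sigma> \<longleftrightarrow> interior \<sigma> \<noteq> {}"

definition dual_cone :: "(real^'d) set \<Rightarrow> (real^'d) set" where
  "dual_cone \<sigma> = {u. \<forall>v\<in>\<sigma>. 0 \<le> u \<bullet> v}"

definition is_facet :: "(real^'d) set \<Rightarrow> (real^'d) set \<Rightarrow> bool" where
  "is_facet F C \<longleftrightarrow> F face_of C \<and> aff_dim F = aff_dim C - 1"

definition primitive_vec :: "int^'d \<Rightarrow> bool" where
  "primitive_vec h \<longleftrightarrow> h \<noteq> 0 \<and> (\<forall>k::int. (\<forall>j. k dvd h $ j) \<longrightarrow> k dvd 1)"

definition primitive_facet_support_fn :: "(real^'d) set \<Rightarrow> int^'d \<Rightarrow> bool" where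
  "primitive_facet_support_fn C h \<longleftrightarrow> primitive_vec h \<and> (\<forall>u\<in>C. 0 \<le> rvec h \<bullet> u)
     \<and> is_facet (C \<inter> {u. rvec h \<bullet> u = 0}) C"

definition semigrp :: "(real^'d) set \<Rightarrow> (int^'d) set" where
  "semigrp \<sigma> = {a. rvec a \<in> dual_cone \<sigma>}"

definition ffact :: "int \<Rightarrow> int \<Rightarrow> int" where
  "ffact g m = (if m < 0 then 1 else (\<Prod>j\<in>{0..m}. g - j))"

text \<open>H_d as a function on Z^d (h_1..h_n are h 0 .. h (n-1)).\<close>
definition Hd :: "(nat \<Rightarrow> int^'d) \<Rightarrow> nat \<Rightarrow> int^'d \<Rightarrow> int^'d \<Rightarrow> int" where
  "Hd h n d a = (\<Prod>i<n. ffact (hval (h i) a) (hval (h i) (- d) - 1))"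

text \<open>Polynomial functions with complex coefficients in d variables, evaluated on Z^d
  (a polynomial is determined by its values on Z^d).\<close>
definition poly_fun :: "(int^'d \<Rightarrow> complex) \<Rightarrow> bool" where
  "poly_fun p \<longleftrightarrow> (\<exists>(K :: (nat^'d) set) c. finite K \<and>
     (\<forall>a. p a = (\<Sum>k\<in>K. c k * (\<Prod>j\<in>UNIV. (of_int (a $ j)) ^ (k $ j)))))"

definition sgring :: "(int^'d) set \<Rightarrow> (int^'d \<Rightarrow> complex) set" where
  "sgring S = {r. finite {a. r a \<noteq> 0} \<and> {a. r a \<noteq> 0} \<subseteq> S}"

definition monom :: "int^'d \<Rightarrow> (int^'d \<Rightarrow> complex)" where
  "monom a = (\<lambda>b. if b = a then 1 else 0)"

definition conv :: "(int^'d \<Rightarrow> complex) \<Rightarrow> (int^'d \<Rightarrow> complex) \<Rightarrow> (int^'d \<Rightarrow> complex)" where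
  "conv r s = (\<lambda>c. \<Sum>a\<in>{a. r a \<noteq> 0}. r a * s (c - a))"

definition is_ideal :: "(int^'d) set \<Rightarrow> (int^'d \<Rightarrow> complex) set \<Rightarrow> bool" where
  "is_ideal S I \<longleftrightarrow> I \<subseteq> sgring S \<and> (\<lambda>_. 0) \<in> I \<and> (\<forall>r\<in>I. \<forall>s\<in>I. (\<lambda>c. r c + s c) \<in> I)
     \<and> (\<forall>r\<in>sgring S. \<forall>s\<in>I. conv r s \<in> I)"

definition mono_ideal :: "(int^'d) set \<Rightarrow> (int^'d) set \<Rightarrow> (int^'d \<Rightarrow> complex) set" where
  "mono_ideal S G = \<Inter> {I. is_ideal S I \<and> monom ` G \<subseteq> I}"

text \<open>delta = x^d f(theta): delta(x^a) = f(a) x^(a+d), extended linearly.\<close>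
definition delta_op :: "(int^'d \<Rightarrow> complex) \<Rightarrow> int^'d \<Rightarrow> (int^'d \<Rightarrow> complex) \<Rightarrow> (int^'d \<Rightarrow> complex)" where
  "delta_op f d r = (\<lambda>b. f (b - d) * r (b - d))"

definition delta_compatible :: "(int^'d \<Rightarrow> complex) \<Rightarrow> int^'d \<Rightarrow> (int^'d \<Rightarrow> complex) set \<Rightarrow> bool" where
  "delta_compatible f d I \<longleftrightarrow> (\<forall>r\<in>I. delta_op f d r \<in> I)"

definition W_beta :: "(nat \<Rightarrow> int^'d) \<Rightarrow> nat \<Rightarrow> (int^'d) set \<Rightarrow> (nat \<Rightarrow> nat) \<Rightarrow> (int^'d) set" where
  "W_beta h n S \<beta> = {a \<in> S. \<forall>i<n. int (\<beta> i) \<le> hval (h i) a}"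

definition W_set :: "(nat \<Rightarrow> int^'d) \<Rightarrow> nat \<Rightarrow> (int^'d) set \<Rightarrow> (nat \<Rightarrow> nat) set \<Rightarrow> (int^'d) set" where
  "W_set h n S B = (\<Union>\<beta>\<in>B. W_beta h n S \<beta>)"

definition compatible_tuple :: "(nat \<Rightarrow> int^'d) \<Rightarrow> nat \<Rightarrow> int^'d \<Rightarrow> (nat \<Rightarrow> nat) \<Rightarrow> bool" where
  "compatible_tuple h n d \<beta> \<longleftrightarrow> (\<forall>i<n. \<beta> i = 0 \<or> hval (h i) d = 0)"

text \<open>val(a) = inf {t real. a + t d in V_mon(f)}, in the extended reals (inf of empty = +infinity).\<close>
definition valf :: "(int^'d \<Rightarrow> complex) \<Rightarrow> int^'d \<Rightarrow> int^'d \<Rightarrow> ereal" where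
  "valf f d a = Inf {ereal t | t. \<exists>v. f v = 0 \<and> rvec v = rvec a + t *\<^sub>R rvec d}"

definition pval :: "(int^'d \<Rightarrow> complex) \<Rightarrow> int^'d \<Rightarrow> int^'d \<Rightarrow> real" where
  "pval f d a = Max {t. real_of_ereal (valf f d a) \<le> t \<and> t < real_of_ereal (valf f d a) + 1
        \<and> (\<exists>v. f v = 0 \<and> rvec v = rvec a + t *\<^sub>R rvec d)}"

definition vpt :: "(int^'d \<Rightarrow> complex) \<Rightarrow> int^'d \<Rightarrow> int^'d \<Rightarrow> int^'d" where
  "vpt f d a = (THE v. rvec v = rvec a + pval f d a *\<^sub>R rvec d)"

end

theory Submission
  imports Defs
begin

text \<open>
  Since delta x^a = f(a) x^(a+d) and I is spanned by the monomials it contains, delta-compatibility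
  of I says: if a \<in> W and f(a) \<noteq> 0 then a + d \<in> W. The dual of a strongly convex cone is
  full-dimensional, so S is cut out by its facet functions h_i; an irredundant subfamily of the
  halfspaces defining it provides the facets with primitive integral normals. The factor H_d of f
  vanishes on the lattice points with 0 \<le> h_i(a) < h_i(-d) for some i, which are exactly those
  where a + d would leave S, and compatibility of beta means that beta only bounds h_i that are
  constant along d. For vpt(b) we shift back along -d: if some h_i(vpt b) were negative, an
  integer shift by k \<ge> 1 would reach the strip 0 \<le> h_i < h_i(-d), where f vanishes, and produce
  a zero of f on the line below val(b).
\<close>

lemma rvec_add: "rvec (a + b) = rvec a + rvec b"
  by (simp add: rvec_def vec_eq_iff)

lemma rvec_minus: "rvec (- a) = - rvec a"
  by (simp add: rvec_def vec_eq_iff)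

lemma rvec_scaleR_int: "rvec (k *s a) = real_of_int k *\<^sub>R rvec a"
  by (simp add: rvec_def vec_eq_iff)

lemma rvec_eq_iff: "rvec a = rvec b \<longleftrightarrow> a = b"
  by (simp add: rvec_def vec_eq_iff)

lemma inner_rvec: "rvec g \<bullet> rvec a = real_of_int (hval g a)"
  by (simp add: rvec_def hval_def inner_vec_def)

lemma hval_add: "hval g (a + b) = hval g a + hval g b"
  by (simp add: hval_def algebra_simps sum.distrib)

lemma hval_minus: "hval g (- a) = - hval g a"
  by (simp add: hval_def sum_negf)

lemma hval_scale: "hval g (k *s a) = k * hval g a"
  by (simp add: hval_def sum_distrib_left algebra_simps)

lemma hval_0 [simp]: "hval g 0 = 0"
  by (simp add: hval_def)

lemma convex_cone_sum:
  assumes "convex_cone K" "\<And>a. a \<in> A \<Longrightarrow> x a \<in> K"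
  shows "sum x A \<in> K"
  using assms(2)
proof (induction A rule: infinite_finite_induct)
  case (insert a A)
  then show ?case by (simp add: convex_cone_add[OF assms(1)])
qed (use convex_cone_contains_0[OF assms(1)] in auto)

lemma nonneg_combinations_eq_convex_cone_hull:
  fixes f :: "'a \<Rightarrow> 'b::real_vector"
  assumes "finite V"
  shows "{(\<Sum>v\<in>V. c v *\<^sub>R f v) | c. \<forall>v\<in>V. 0 \<le> c v} = convex_cone hull (f ` V)"
    (is "?K = _")
proof
  show "?K \<subseteq> convex_cone hull (f ` V)"
    by (force intro: convex_cone_sum convex_cone_convex_cone_hull convex_cone_hull_mul hull_inc)
  have "convex_cone ?K"
    unfolding convex_cone_iff
  proof (intro conjI ballI allI impI)
    show "0 \<in> ?K" by (rule CollectI, rule exI[of _ "\<lambda>_. 0"]) simp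
  next
    fix x y assume "x \<in> ?K" "y \<in> ?K"
    then obtain c1 c2 where "x = (\<Sum>v\<in>V. c1 v *\<^sub>R f v)" "\<forall>v\<in>V. 0 \<le> c1 v"
      and "y = (\<Sum>v\<in>V. c2 v *\<^sub>R f v)" "\<forall>v\<in>V. 0 \<le> c2 v" by auto
    then show "x + y \<in> ?K"
      by (intro CollectI exI[of _ "\<lambda>v. c1 v + c2 v"]) (auto simp: scaleR_add_left sum.distrib)
  next
    fix x and t :: real assume "x \<in> ?K" "0 \<le> t"
    then obtain c where "x = (\<Sum>v\<in>V. c v *\<^sub>R f v)" "\<forall>v\<in>V. 0 \<le> c v" by auto
    then show "t *\<^sub>R x \<in> ?K"
      using \<open>0 \<le> t\<close> by (intro CollectI exI[of _ "\<lambda>v. t * c v"]) (auto simp: scaleR_sum_right)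
  qed
  moreover have "f ` V \<subseteq> ?K"
  proof
    fix y assume "y \<in> f ` V"
    then obtain w where w: "w \<in> V" "y = f w" by auto
    have "(\<Sum>v\<in>V. (if v = w then 1 else 0) *\<^sub>R f v) = f w"
      using w(1) assms by (simp add: if_distrib[of "\<lambda>c. c *\<^sub>R _"] sum.delta cong: if_cong)
    then show "y \<in> ?K"
      using w by (intro CollectI exI[of _ "\<lambda>v. if v = w then 1 else 0"]) auto
  qed
  ultimately show "convex_cone hull (f ` V) \<subseteq> ?K"
    by (rule hull_minimal[rotated])
qed

lemma rat_poly_cone_imp_hull:
  assumes "rat_poly_cone \<sigma>"
  obtains V :: "(int^'d) set" where "finite V" "\<sigma> = convex_cone hull (rvec ` V)"
proof -
  obtain V :: "(int^'d) set" where "finite V" "\<sigma> = {(\<Sum>v\<in>V. c v *\<^sub>R rvec v) | c. \<forall>v\<in>V. 0 \<le> c v}"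
    using assms unfolding rat_poly_cone_def by blast
  with that show ?thesis by (simp add: nonneg_combinations_eq_convex_cone_hull)
qed

lemma dual_cone_convex_cone_hull:
  "dual_cone (convex_cone hull S) = {u. \<forall>w\<in>S. 0 \<le> u \<bullet> w}"
proof (intro set_eqI iffI)
  fix u assume "u \<in> dual_cone (convex_cone hull S)"
  then show "u \<in> {u. \<forall>w\<in>S. 0 \<le> u \<bullet> w}" by (auto simp: dual_cone_def hull_inc)
next
  fix u assume "u \<in> {u. \<forall>w\<in>S. 0 \<le> u \<bullet> w}"
  then have "convex_cone hull S \<subseteq> {x. 0 \<le> u \<bullet> x}"
    by (intro hull_minimal convex_cone_halfspace_ge) auto
  then show "u \<in> dual_cone (convex_cone hull S)" by (auto simp: dual_cone_def)
qed

lemma convex_cone_dual_cone: "convex_cone (dual_cone K)"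
  unfolding dual_cone_def convex_cone_iff
  by (auto simp: inner_add_left intro!: add_nonneg_nonneg mult_nonneg_nonneg)

lemma mem_closed_convex_cone_iff_dual:
  assumes "closed K" "convex_cone K"
  shows "z \<in> K \<longleftrightarrow> (\<forall>u\<in>dual_cone K. 0 \<le> z \<bullet> u)"
proof
  show "z \<in> K \<Longrightarrow> \<forall>u\<in>dual_cone K. 0 \<le> z \<bullet> u"
    unfolding dual_cone_def by (simp add: inner_commute)
next
  assume z: "\<forall>u\<in>dual_cone K. 0 \<le> z \<bullet> u"
  show "z \<in> K"
  proof (rule ccontr)
    assume "z \<notin> K"
    have "convex K" using assms(2) by (simp add: convex_cone_def)
    then obtain a b where ab: "a \<bullet> z < b" "\<forall>x\<in>K. a \<bullet> x > b"
      using separating_hyperplane_closed_point assms(1) \<open>z \<notin> K\<close> by blast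
    have b0: "b < 0" using ab(2) convex_cone_contains_0[OF assms(2)] by fastforce
    have "0 \<le> a \<bullet> x" if x: "x \<in> K" for x
    proof (rule ccontr)
      assume neg: "\<not> 0 \<le> a \<bullet> x"
      \<comment> \<open>scaling x onto the hyperplane a \<bullet> x = b contradicts strict separation\<close>
      define t where "t = b / (a \<bullet> x)"
      have "0 \<le> t" unfolding t_def using neg b0 by (simp add: divide_nonpos_neg)
      then have "a \<bullet> (t *\<^sub>R x) > b" using ab(2) convex_cone_scaleR[OF assms(2)] x by blast
      moreover have "a \<bullet> (t *\<^sub>R x) = b" unfolding t_def using neg by simp
      ultimately show False by simp
    qed
    then have "a \<in> dual_cone K" by (simp add: dual_cone_def)
    then show False using z ab(1) b0 by (fastforce simp: inner_commute)
  qed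
qed

lemma interior_dual_cone_nonempty:
  assumes "closed K" "convex_cone K" "strongly_convex K"
  shows "interior (dual_cone K) \<noteq> {}"
proof
  assume "interior (dual_cone K) = {}"
  moreover have "convex (dual_cone K)" using convex_cone_dual_cone[of K] by (simp add: convex_cone_def)
  ultimately obtain a b where a: "a \<noteq> 0" "dual_cone K \<subseteq> {x. a \<bullet> x = b}"
    using empty_interior_subset_hyperplane by metis
  have "b = 0" using a(2) convex_cone_contains_0[OF convex_cone_dual_cone[of K]] by auto
  then have "a \<in> K" "- a \<in> K"
    using a(2) unfolding mem_closed_convex_cone_iff_dual[OF assms(1,2)] by (auto simp: inner_commute)
  then show False using assms(3) a(1) unfolding strongly_convex_def by blast
qed

lemma facet_separating_outside_point:
  fixes N :: "'a::euclidean_space set"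
  assumes "finite N" and C: "C = {u. \<forall>w\<in>N. 0 \<le> w \<bullet> u}" and aff: "affine hull C = UNIV"
    and "u \<notin> C"
  obtains w where "w \<in> N" "w \<bullet> u < 0" "(C \<inter> {x. w \<bullet> x = 0}) facet_of C"
proof -
  define hs where "hs w = {x. - w \<bullet> x \<le> 0}" for w :: 'a
  define P where "P F \<longleftrightarrow> F \<subseteq> hs ` (N - {0}) \<and> \<Inter>F = C" for F
  have "\<Inter>(hs ` (N - {0})) = C"
  proof (intro set_eqI iffI)
    fix u assume u: "u \<in> \<Inter>(hs ` (N - {0}))"
    have "0 \<le> w \<bullet> u" if "w \<in> N" for w
    proof (cases "w = 0")
      case False
      then have "hs w \<in> hs ` (N - {0})" using that by simp
      then have "u \<in> hs w" using u by (rule InterD[rotated])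
      then show ?thesis by (simp add: hs_def)
    qed simp
    then show "u \<in> C" by (simp add: C)
  next
    fix u assume "u \<in> C"
    then show "u \<in> \<Inter>(hs ` (N - {0}))" by (simp add: C hs_def)
  qed
  then have "P (hs ` (N - {0}))" by (simp add: P_def)
  from ex_has_least_nat[of P, OF this, of card]
  obtain F where "P F \<and> (\<forall>F'. P F' \<longrightarrow> card F \<le> card F')" ..
  then have PF: "P F" and minF: "\<forall>F'. P F' \<longrightarrow> card F \<le> card F'" by simp_all
  have CF: "\<Inter>F = C" using PF by (simp add: P_def)
  have "finite (hs ` (N - {0}))" using \<open>finite N\<close> by simp
  then have finF: "finite F" using PF by (auto simp: P_def intro: finite_subset)
  have "\<forall>H\<in>F. \<exists>w. w \<in> N - {0} \<and> hs w = H" using PF by (auto simp: P_def)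
  then obtain nv where nvN: "\<And>H. H \<in> F \<Longrightarrow> nv H \<in> N - {0}"
    and nvH: "\<And>H. H \<in> F \<Longrightarrow> hs (nv H) = H"
    by metis
  have faceq: "- nv H \<noteq> 0 \<and> H = {x. - nv H \<bullet> x \<le> 0}" if "H \<in> F" for H
    using nvN[OF that] nvH[OF that] by (auto simp: hs_def)
  \<comment> \<open>minimality of F makes every member of F irredundant, so each one cuts out a facet\<close>
  have psub: "C \<subset> affine hull C \<inter> \<Inter>F'" if "F' \<subset> F" for F'
  proof -
    have "\<Inter>F' \<noteq> C"
    proof
      assume "\<Inter>F' = C"
      then have "P F'" using that PF by (auto simp: P_def)
      then have "card F \<le> card F'" using minF by blast
      moreover have "card F' < card F" using that finF by (rule psubset_card_mono[rotated])
      ultimately show False by simp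
    qed
    moreover have "C \<subseteq> \<Inter>F'" using that CF by blast
    ultimately show ?thesis using aff by auto
  qed
  have "C = affine hull C \<inter> \<Inter>F" by (simp add: aff CF)
  note facet_iff = facet_of_polyhedron_explicit[OF finF this faceq psub]
  have facet: "(C \<inter> {x. - nv H \<bullet> x = 0}) facet_of C" if "H \<in> F" for H
    using that by (intro facet_iff[THEN iffD2] exI[of _ H] conjI refl)
  obtain H where H: "H \<in> F" "u \<notin> H" using \<open>u \<notin> C\<close> CF by blast
  show ?thesis
  proof (rule that)
    show "nv H \<in> N" using nvN[OF H(1)] by simp
    have "u \<notin> hs (nv H)" using H(2) by (simp add: nvH[OF H(1)])
    then show "nv H \<bullet> u < 0" by (simp add: hs_def)
    have "{x. - nv H \<bullet> x = 0} = {x. nv H \<bullet> x = 0}" by simp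
    then show "(C \<inter> {x. nv H \<bullet> x = 0}) facet_of C" using facet[OF H(1)] by simp
  qed
qed

lemma primitive_vec_multiple:
  fixes v :: "int^'d"
  assumes "v \<noteq> 0"
  obtains g and k :: int where "primitive_vec g" "0 < k" "v = k *s g"
proof -
  define k where "k = Gcd (range (\<lambda>j. v $ j))"
  have "k \<noteq> 0" unfolding k_def using assms by (auto simp: vec_eq_iff)
  then have k0: "0 < k" by (simp add: k_def order_le_neq_trans)
  define g where "g = (\<chi> j. v $ j div k)"
  have vg: "v $ j = k * g $ j" for j
    unfolding g_def k_def by (simp add: Gcd_dvd)
  have "l dvd 1" if l: "\<forall>j. l dvd g $ j" for l
  proof -
    have "l * k dvd v $ j" for j using l vg by (simp add: mult.commute mult_dvd_mono)
    then have "l * k dvd Gcd (range (\<lambda>j. v $ j))" by (auto intro: Gcd_greatest)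
    then have "l * k dvd 1 * k" by (simp add: k_def)
    then show "l dvd 1" using \<open>k \<noteq> 0\<close> by (subst (asm) dvd_mult_cancel_right) simp
  qed
  moreover have "g \<noteq> 0" using assms vg by (auto simp: vec_eq_iff)
  ultimately show ?thesis
    using that k0 vg unfolding primitive_vec_def by (auto simp: vec_eq_iff)
qed

lemma primitive_facet_support_of_facet_normal:
  assumes "v \<noteq> 0" "\<forall>u\<in>C. 0 \<le> rvec v \<bullet> u" "(C \<inter> {x. rvec v \<bullet> x = 0}) facet_of C"
  obtains g and k :: int where "primitive_facet_support_fn C g" "0 < k" "v = k *s g"
proof -
  obtain g k where g: "primitive_vec g" "0 < k" "v = k *s g"
    using assms(1) by (rule primitive_vec_multiple)
  have hv: "rvec v \<bullet> x = real_of_int k * (rvec g \<bullet> x)" for x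
    using g(3) by (simp add: rvec_scaleR_int)
  have "primitive_facet_support_fn C g"
    unfolding primitive_facet_support_fn_def is_facet_def
  proof (intro conjI ballI)
    show "0 \<le> rvec g \<bullet> u" if "u \<in> C" for u
      using assms(2) that g(2) hv[of u] by (auto simp: zero_le_mult_iff)
    show "(C \<inter> {u. rvec g \<bullet> u = 0}) face_of C"
      "aff_dim (C \<inter> {u. rvec g \<bullet> u = 0}) = aff_dim C - 1"
      using assms(3) g(2) by (simp_all add: hv facet_of_def)
  qed (rule g(1))
  with g(2,3) that show ?thesis by blast
qed

lemma semigrp_iff_facet_supports:
  assumes cone: "rat_poly_cone \<sigma>" and strongly: "strongly_convex \<sigma>"
    and facets: "bij_betw h {..<n} {g. primitive_facet_support_fn (dual_cone \<sigma>) g}"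
  shows "a \<in> semigrp \<sigma> \<longleftrightarrow> (\<forall>i<n. 0 \<le> hval (h i) a)"
proof
  assume a: "a \<in> semigrp \<sigma>"
  show "\<forall>i<n. 0 \<le> hval (h i) a"
  proof (intro allI impI)
    fix i assume "i < n"
    then have "primitive_facet_support_fn (dual_cone \<sigma>) (h i)"
      using facets by (auto dest: bij_betwE)
    then have "0 \<le> rvec (h i) \<bullet> rvec a"
      using a by (simp add: primitive_facet_support_fn_def semigrp_def)
    then show "0 \<le> hval (h i) a" by (simp add: inner_rvec)
  qed
next
  assume nonneg: "\<forall>i<n. 0 \<le> hval (h i) a"
  obtain V where "finite V" and \<sigma>: "\<sigma> = convex_cone hull (rvec ` V)"
    using cone by (rule rat_poly_cone_imp_hull)
  define C where "C = dual_cone \<sigma>"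
  have C: "C = {u. \<forall>w\<in>rvec ` V. 0 \<le> w \<bullet> u}"
    unfolding C_def \<sigma> dual_cone_convex_cone_hull by (simp add: inner_commute)
  have "interior C \<noteq> {}" unfolding C_def
    using \<open>finite V\<close> strongly unfolding \<sigma>
    by (intro interior_dual_cone_nonempty closed_convex_cone_hull convex_cone_convex_cone_hull) auto
  then have aff: "affine hull C = UNIV" by (rule affine_hull_nonempty_interior)
  show "a \<in> semigrp \<sigma>"
  proof (rule ccontr)
    assume "a \<notin> semigrp \<sigma>"
    then have "rvec a \<notin> C" by (simp add: semigrp_def C_def)
    then obtain v where v: "v \<in> V" "rvec v \<bullet> rvec a < 0"
      and facet: "(C \<inter> {x. rvec v \<bullet> x = 0}) facet_of C"
      using facet_separating_outside_point[OF _ C aff] \<open>finite V\<close> by blast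
    have "v \<noteq> 0" using v(2) by (auto simp: inner_rvec hval_def)
    moreover have "\<forall>u\<in>C. 0 \<le> rvec v \<bullet> u" using v(1) unfolding C by blast
    ultimately obtain g k where g: "primitive_facet_support_fn C g" "0 < k" "v = k *s g"
      using facet by (rule primitive_facet_support_of_facet_normal)
    then have "g \<in> h ` {..<n}" using facets by (simp add: C_def bij_betw_def)
    then obtain i where "i < n" "h i = g" by auto
    moreover have "hval v a = k * hval g a"
      using g(3) by (simp add: hval_def sum_distrib_left algebra_simps)
    then have "hval g a < 0"
      using v(2) g(2) by (simp add: inner_rvec mult_less_0_iff)
    ultimately show False using nonneg by auto
  qed
qed

lemma conv_nonzero_imp:
  assumes "conv r s c \<noteq> 0"
  obtains a where "r a \<noteq> 0" "s (c - a) \<noteq> 0"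
proof -
  have "\<not> (\<forall>a\<in>{a. r a \<noteq> 0}. r a * s (c - a) = 0)"
    using assms unfolding conv_def by (metis (mono_tags, lifting) sum.neutral)
  then show ?thesis using that by auto
qed

lemma conv_scaled_monom_0: "conv (\<lambda>b. k * monom 0 b) s = (\<lambda>b. k * s b)"
proof (cases "k = 0")
  case False
  then have supp: "{a. k * monom 0 a \<noteq> 0} = {0}" by (auto simp: monom_def)
  show ?thesis unfolding conv_def supp by (simp add: monom_def)
qed (simp add: conv_def)

lemma is_ideal_sgring:
  assumes "W \<subseteq> S" and add_closed: "\<And>a b. a \<in> S \<Longrightarrow> b \<in> W \<Longrightarrow> a + b \<in> W"
  shows "is_ideal S (sgring W)"
  unfolding is_ideal_def
proof (intro conjI ballI)
  show "sgring W \<subseteq> sgring S" using assms(1) by (auto simp: sgring_def)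
  show "(\<lambda>_. 0) \<in> sgring W" by (simp add: sgring_def)
next
  fix r s assume r: "r \<in> sgring W" and s: "s \<in> sgring W"
  have "{c. r c + s c \<noteq> 0} \<subseteq> {a. r a \<noteq> 0} \<union> {a. s a \<noteq> 0}" by auto
  with r s show "(\<lambda>c. r c + s c) \<in> sgring W" by (auto simp: sgring_def intro: finite_subset)
next
  fix r s assume r: "r \<in> sgring S" and s: "s \<in> sgring W"
  have supp: "\<exists>a b. r a \<noteq> 0 \<and> s b \<noteq> 0 \<and> c = a + b" if "conv r s c \<noteq> 0" for c
    using that by (elim conv_nonzero_imp) force
  have "{c. conv r s c \<noteq> 0} \<subseteq> (\<lambda>(a, b). a + b) ` ({a. r a \<noteq> 0} \<times> {b. s b \<noteq> 0})"
    by (auto dest!: supp)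
  moreover have "{c. conv r s c \<noteq> 0} \<subseteq> W"
    using r s by (auto simp: sgring_def dest!: supp intro!: add_closed)
  ultimately show "conv r s \<in> sgring W"
    using r s by (auto simp: sgring_def intro: finite_subset)
qed

lemma sgring_subset_mono_ideal:
  assumes "0 \<in> S"
  shows "sgring W \<subseteq> mono_ideal S W"
  unfolding mono_ideal_def
proof (intro subsetI InterI)
  fix r I assume r: "r \<in> sgring W" and "I \<in> {I. is_ideal S I \<and> monom ` W \<subseteq> I}"
  then have I: "is_ideal S I" and monI: "monom ` W \<subseteq> I" by auto
  have unit: "(\<lambda>b. k * monom 0 b) \<in> sgring S" for k
    using assms by (auto simp: sgring_def monom_def)
  have scaled: "(\<lambda>b. k * monom a b) \<in> I" if "a \<in> W" for a k
  proof -
    have "conv (\<lambda>b. k * monom 0 b) (monom a) \<in> I"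
      using I monI that unit unfolding is_ideal_def by blast
    then show ?thesis by (simp add: conv_scaled_monom_0)
  qed
  have sums: "finite A \<Longrightarrow> A \<subseteq> W \<Longrightarrow> (\<lambda>b. \<Sum>a\<in>A. r a * monom a b) \<in> I" for A
  proof (induction A rule: finite_induct)
    case (insert x A)
    then show ?case
      using I scaled[of x "r x"] unfolding is_ideal_def by auto
  qed (use I in \<open>simp add: is_ideal_def\<close>)
  have "r = (\<lambda>b. \<Sum>a\<in>{a. r a \<noteq> 0}. r a * monom a b)"
    using r by (auto simp: sgring_def monom_def fun_eq_iff if_distrib[of "(*) _"] cong: if_cong)
  moreover have "(\<lambda>b. \<Sum>a\<in>{a. r a \<noteq> 0}. r a * monom a b) \<in> I"
    using r by (intro sums) (auto simp: sgring_def)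
  ultimately show "r \<in> I" by simp
qed

lemma mono_ideal_eq_sgring:
  assumes "W \<subseteq> S" "0 \<in> S" "\<And>a b. a \<in> S \<Longrightarrow> b \<in> W \<Longrightarrow> a + b \<in> W"
  shows "mono_ideal S W = sgring W"
proof
  have "monom ` W \<subseteq> sgring W" by (auto simp: sgring_def monom_def split: if_splits)
  then show "mono_ideal S W \<subseteq> sgring W"
    using is_ideal_sgring[OF assms(1,3)] unfolding mono_ideal_def by blast
qed (rule sgring_subset_mono_ideal[OF assms(2)])

lemma delta_op_sgring:
  assumes shift: "\<And>a. a \<in> W \<Longrightarrow> f a \<noteq> 0 \<Longrightarrow> a + d \<in> W" and r: "r \<in> sgring W"
  shows "delta_op f d r \<in> sgring W"
proof -
  have "{b. delta_op f d r b \<noteq> 0} \<subseteq> (\<lambda>a. a + d) ` {a. r a \<noteq> 0}"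
    by (auto simp: delta_op_def intro: image_eqI[of _ _ "_ - d"])
  moreover have "{b. delta_op f d r b \<noteq> 0} \<subseteq> W"
    using r shift[of "_ - d"] by (auto simp: delta_op_def sgring_def)
  ultimately show ?thesis using r by (auto simp: sgring_def intro: finite_subset)
qed

lemma ffact_eq_0: "0 \<le> x \<Longrightarrow> x \<le> m \<Longrightarrow> ffact x m = 0"
  unfolding ffact_def by (auto intro!: prod_zero bexI[where x = x])

lemma Hd_eq_0:
  assumes "i < n" "0 \<le> hval (h i) a" "hval (h i) a < hval (h i) (- d)"
  shows "Hd h n d a = 0"
  unfolding Hd_def using assms by (intro prod_zero bexI[of _ i]) (auto intro: ffact_eq_0)

lemma hval_on_line:
  assumes "rvec v = rvec a + t *\<^sub>R rvec d"
  shows "real_of_int (hval g v) = real_of_int (hval g a) + t * real_of_int (hval g d)"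
proof -
  have "rvec g \<bullet> rvec v = rvec g \<bullet> rvec a + t * (rvec g \<bullet> rvec d)"
    using assms by (simp add: inner_add_right)
  then show ?thesis by (simp add: inner_rvec)
qed

definition zero_params :: "(int^'d \<Rightarrow> complex) \<Rightarrow> int^'d \<Rightarrow> int^'d \<Rightarrow> real set" where
  "zero_params f d a = {t. \<exists>v. f v = 0 \<and> rvec v = rvec a + t *\<^sub>R rvec d}"

lemma valf_le_zero_param: "t \<in> zero_params f d a \<Longrightarrow> valf f d a \<le> ereal t"
  unfolding valf_def zero_params_def by (auto intro: Inf_lower)

lemma finite_lattice_points_on_segment:
  assumes "d \<noteq> 0"
  shows "finite {t. \<bar>t\<bar> \<le> M \<and> (\<exists>v. rvec v = rvec a + t *\<^sub>R rvec d)}"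
proof -
  obtain j where j: "d $ j \<noteq> 0" using assms by (auto simp: vec_eq_iff)
  define D where "D = real_of_int (d $ j)"
  have "D \<noteq> 0" using j by (simp add: D_def)
  define K where "K = \<lceil>M * \<bar>D\<bar>\<rceil>"
  \<comment> \<open>the j-th coordinate forces t \<in> \<int>/D\<close>
  have "{t. \<bar>t\<bar> \<le> M \<and> (\<exists>v. rvec v = rvec a + t *\<^sub>R rvec d)} \<subseteq> (\<lambda>m. real_of_int m / D) ` {-K..K}"
  proof
    fix t assume "t \<in> {t. \<bar>t\<bar> \<le> M \<and> (\<exists>v. rvec v = rvec a + t *\<^sub>R rvec d)}"
    then obtain v where t: "\<bar>t\<bar> \<le> M" and v: "rvec v = rvec a + t *\<^sub>R rvec d" by blast
    define m where "m = v $ j - a $ j"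
    have "rvec v $ j = rvec a $ j + t * rvec d $ j" using v by simp
    then have tm: "real_of_int m = t * D" by (simp add: rvec_def m_def D_def)
    have "\<bar>real_of_int m\<bar> \<le> M * \<bar>D\<bar>"
      unfolding tm abs_mult by (rule mult_right_mono[OF t]) simp
    then have "\<bar>m\<bar> \<le> K" unfolding K_def by linarith
    then have "m \<in> {-K..K}" by auto
    moreover have "t = real_of_int m / D" using tm \<open>D \<noteq> 0\<close> by simp
    ultimately show "t \<in> (\<lambda>m. real_of_int m / D) ` {-K..K}" by blast
  qed
  then show ?thesis by (rule finite_subset) simp
qed

lemma vpt_zero_of_finite_valf:
  assumes "d \<noteq> 0" and r: "valf f d a = ereal r"
  shows "f (vpt f d a) = 0" "rvec (vpt f d a) = rvec a + pval f d a *\<^sub>R rvec d"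
    and "pval f d a < r + 1"
proof -
  define P where "P = {t. r \<le> t \<and> t < r + 1 \<and> t \<in> zero_params f d a}"
  have pval: "pval f d a = Max P" unfolding pval_def P_def zero_params_def r by simp
  have "Inf (ereal ` zero_params f d a) < ereal (r + 1)"
    using r by (simp add: valf_def zero_params_def image_Collect)
  then obtain t0 where t0: "t0 \<in> zero_params f d a" "t0 < r + 1" by (auto simp: Inf_less_iff)
  have "r \<le> t0" using valf_le_zero_param[OF t0(1)] r by simp
  then have "t0 \<in> P" using t0 by (simp add: P_def)
  moreover have "finite P"
    using finite_lattice_points_on_segment[OF assms(1), of "\<bar>r\<bar> + 1" a]
    by (rule finite_subset[rotated]) (auto simp: P_def zero_params_def)
  ultimately have "pval f d a \<in> P" unfolding pval by (intro Max_in) auto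
  then obtain v where v: "f v = 0" "rvec v = rvec a + pval f d a *\<^sub>R rvec d"
    and "pval f d a < r + 1" by (auto simp: P_def zero_params_def)
  moreover have "vpt f d a = v" unfolding vpt_def
    using v(2) by (intro the_equality) (auto simp: rvec_eq_iff[symmetric])
  ultimately show "f (vpt f d a) = 0" "rvec (vpt f d a) = rvec a + pval f d a *\<^sub>R rvec d"
    and "pval f d a < r + 1" by simp_all
qed

lemma hval_vpt_nonneg:
  assumes "d \<noteq> 0" and r: "valf f d b = ereal r"
    and "0 \<le> hval g (- d)" and b: "0 \<le> hval g b"
    and vanish: "\<And>a. 0 \<le> hval g a \<Longrightarrow> hval g a < hval g (- d) \<Longrightarrow> f a = 0"
  shows "0 \<le> hval g (vpt f d b)"
proof (rule ccontr)
  define v t where "v = vpt f d b" and "t = pval f d b"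
  note vpt = vpt_zero_of_finite_valf[OF assms(1) r, folded v_def t_def]
  define x c where "x = hval g v" and "c = hval g (- d)"
  assume "\<not> 0 \<le> hval g (vpt f d b)"
  then have "x < 0" by (simp add: x_def v_def)
  have line: "real_of_int x = real_of_int (hval g b) - t * real_of_int c"
    using hval_on_line[OF vpt(2), of g] by (simp add: x_def c_def hval_minus)
  have "c \<noteq> 0"
  proof
    assume "c = 0"
    then have "x = hval g b" using line by simp
    with b \<open>x < 0\<close> show False by simp
  qed
  then have "0 < c" using assms(3) by (simp add: c_def)
  \<comment> \<open>moving k = -(x div c) steps along -d lands on a zero of f whose g-value is x mod c;
    its parameter t - k lies below val\<close>
  define k where "k = - (x div c)"
  have "x div c < 0" using \<open>x < 0\<close> \<open>0 < c\<close> by (simp add: pos_imp_zdiv_neg_iff)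
  then have "1 \<le> k" by (simp add: k_def)
  define w where "w = v + k *s (- d)"
  have "hval g w = x + k * c" by (simp only: w_def x_def c_def hval_add hval_scale)
  also have "\<dots> = x mod c" by (simp add: k_def minus_div_mult_eq_mod[symmetric])
  finally have "f w = 0"
    using \<open>0 < c\<close> by (intro vanish) (simp_all add: c_def pos_mod_sign pos_mod_bound)
  have "rvec w = rvec v + real_of_int k *\<^sub>R (- rvec d)"
    by (simp only: w_def rvec_add rvec_scaleR_int rvec_minus)
  then have "rvec w = rvec b + (t - real_of_int k) *\<^sub>R rvec d"
    using vpt(2) by (simp add: scaleR_diff_left)
  with \<open>f w = 0\<close> have "t - real_of_int k \<in> zero_params f d b" by (auto simp: zero_params_def)
  then have "ereal r \<le> ereal (t - real_of_int k)" unfolding r[symmetric] by (rule valf_le_zero_param)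
  then have "r \<le> t - real_of_int k" by simp
  then show False using \<open>1 \<le> k\<close> vpt(3) by linarith
qed

locale compatible_ideal_setting =
  fixes h :: "nat \<Rightarrow> int^'d" and n :: nat and S :: "(int^'d) set"
    and f :: "int^'d \<Rightarrow> complex" and d :: "int^'d" and B :: "(nat \<Rightarrow> nat) set"
  assumes mem_S_iff: "a \<in> S \<longleftrightarrow> (\<forall>i<n. 0 \<le> hval (h i) a)"
    and neg_d_mem: "- d \<in> S"
    and f_vanishes: "i < n \<Longrightarrow> 0 \<le> hval (h i) a \<Longrightarrow> hval (h i) a < hval (h i) (- d) \<Longrightarrow> f a = 0"
    and compatible: "\<beta> \<in> B \<Longrightarrow> compatible_tuple h n d \<beta>"
begin

abbreviation W :: "(int^'d) set" where
  "W \<equiv> W_set h n S B"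

lemma W_subset: "W \<subseteq> S"
  by (auto simp: W_set_def W_beta_def)

lemma W_add_closed:
  assumes "a \<in> S" "b \<in> W"
  shows "a + b \<in> W"
proof -
  obtain \<beta> where \<beta>: "\<beta> \<in> B" "b \<in> W_beta h n S \<beta>" using assms(2) by (auto simp: W_set_def)
  then have "a + b \<in> W_beta h n S \<beta>"
    using assms(1) unfolding W_beta_def mem_S_iff by (auto simp: hval_add add_increasing)
  then show ?thesis using \<beta>(1) by (auto simp: W_set_def)
qed

lemma mem_W_if_levels_kept:
  assumes "a \<in> W" "v \<in> S" "\<And>i. i < n \<Longrightarrow> hval (h i) d = 0 \<Longrightarrow> hval (h i) v = hval (h i) a"
  shows "v \<in> W"
proof -
  obtain \<beta> where \<beta>: "\<beta> \<in> B" "a \<in> W_beta h n S \<beta>" using assms(1) by (auto simp: W_set_def)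
  have "int (\<beta> i) \<le> hval (h i) v" if i: "i < n" for i
  proof -
    have "\<beta> i = 0 \<or> hval (h i) d = 0"
      using compatible[OF \<beta>(1)] i by (simp add: compatible_tuple_def)
    moreover have "0 \<le> hval (h i) v" using assms(2) i by (simp add: mem_S_iff)
    moreover have "int (\<beta> i) \<le> hval (h i) a" using \<beta>(2) i by (simp add: W_beta_def)
    ultimately show ?thesis using assms(3)[OF i] by auto
  qed
  then have "v \<in> W_beta h n S \<beta>" using assms(2) by (simp add: W_beta_def)
  then show ?thesis using \<beta>(1) by (auto simp: W_set_def)
qed

lemma shift_mem_W:
  assumes "a \<in> W" "f a \<noteq> 0"
  shows "a + d \<in> W"
proof (rule mem_W_if_levels_kept[OF assms(1)])
  show "a + d \<in> S" unfolding mem_S_iff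
  proof (intro allI impI)
    fix i assume i: "i < n"
    have "0 \<le> hval (h i) a" using assms(1) W_subset i by (auto simp: mem_S_iff)
    then have "hval (h i) (- d) \<le> hval (h i) a"
      using f_vanishes[OF i] assms(2) by (meson not_le)
    then show "0 \<le> hval (h i) (a + d)" by (simp add: hval_add hval_minus)
  qed
qed (simp add: hval_add)

lemma delta_compatible_mono_ideal: "delta_compatible f d (mono_ideal S W)"
proof -
  have "0 \<in> S" by (simp add: mem_S_iff)
  then have "mono_ideal S W = sgring W"
    using W_subset W_add_closed by (intro mono_ideal_eq_sgring)
  then show ?thesis
    unfolding delta_compatible_def using shift_mem_W by (auto intro: delta_op_sgring)
qed

lemma vpt_mem_W:
  assumes "d \<noteq> 0" "b \<in> W" "\<bar>valf f d b\<bar> \<noteq> \<infinity>"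
  shows "vpt f d b \<in> W"
proof -
  obtain r where r: "valf f d b = ereal r" using assms(3) by (cases "valf f d b") auto
  have "b \<in> S" using assms(2) W_subset by blast
  have "0 \<le> hval (h i) (vpt f d b)" if i: "i < n" for i
  proof (rule hval_vpt_nonneg[OF assms(1) r])
    show "0 \<le> hval (h i) (- d)" using neg_d_mem i by (simp add: mem_S_iff)
    show "0 \<le> hval (h i) b" using \<open>b \<in> S\<close> i by (simp add: mem_S_iff)
  qed (rule f_vanishes[OF i])
  moreover have "hval (h i) (vpt f d b) = hval (h i) b" if "hval (h i) d = 0" for i
    using hval_on_line[OF vpt_zero_of_finite_valf(2)[OF assms(1) r], of "h i"] that by simp
  ultimately show ?thesis
    by (intro mem_W_if_levels_kept[OF assms(2)]) (simp_all add: mem_S_iff)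
qed

end

theorem mainTheorem6:
  fixes \<sigma> :: "(real^'d) set"
    and h :: "nat \<Rightarrow> int^'d" and n :: nat
    and f :: "int^'d \<Rightarrow> complex" and d :: "int^'d"
    and B :: "(nat \<Rightarrow> nat) set"
  assumes cone: "rat_poly_cone \<sigma>" and fulldim: "full_dimensional \<sigma>"
    and strongly: "strongly_convex \<sigma>"
    and facets: "bij_betw h {..<n} {g. primitive_facet_support_fn (dual_cone \<sigma>) g}"
    and fpoly: "poly_fun f"
    and fdiv: "\<exists>g. poly_fun g \<and> (\<forall>a. f a = of_int (Hd h n d a) * g a)"
    and dnz: "d \<noteq> 0" and negd: "- d \<in> semigrp \<sigma>"
    and Bdom: "\<forall>\<beta>\<in>B. \<forall>i\<ge>n. \<beta> i = 0"
    and Bcompat: "\<forall>\<beta>\<in>B. compatible_tuple h n d \<beta>"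
  shows "delta_compatible f d (mono_ideal (semigrp \<sigma>) (W_set h n (semigrp \<sigma>) B))
    \<and> (\<forall>b\<in>W_set h n (semigrp \<sigma>) B. \<bar>valf f d b\<bar> \<noteq> \<infinity> \<longrightarrow>
           vpt f d b \<in> W_set h n (semigrp \<sigma>) B)"
proof -
  obtain g where g: "\<And>a. f a = of_int (Hd h n d a) * g a" using fdiv by blast
  interpret compatible_ideal_setting h n "semigrp \<sigma>" f d B
  proof
    show "a \<in> semigrp \<sigma> \<longleftrightarrow> (\<forall>i<n. 0 \<le> hval (h i) a)" for a
      by (rule semigrp_iff_facet_supports[OF cone strongly facets])
    show "- d \<in> semigrp \<sigma>" by (rule negd)
    show "f a = 0" if "i < n" "0 \<le> hval (h i) a" "hval (h i) a < hval (h i) (- d)" for i a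
      using Hd_eq_0[of i n h a d, OF that] g by simp
    show "compatible_tuple h n d \<beta>" if "\<beta> \<in> B" for \<beta>
      using Bcompat that by blast
  qed
  show ?thesis
    using delta_compatible_mono_ideal vpt_mem_W[OF dnz] by (intro conjI ballI impI)
qed

end
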